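(* Let $a_+>0$, $I_0>0$, let $t_0$ be an integer time, and let $N(t_0),N(t_0+1),N(t_0+2),\dots$ be nonnegative real numbers. Let $m$ be an integer with $0\le m<\lfloor a_+\rfloor+1$, and consider the linear system in the $m+1$ unknowns $x_0,\dots,x_m$ (where $x_a$ stands for $\mathcal{R}(t_0+m,a)$) consisting of the $m+1$ equations, for $k=0,1,\dots,m$, $$\sum_{j=0}^{k-1}N(t_0+k-j)\,x_{m-k+j}\;+\;I_0\,x_m\;+\;\sum_{d=1}^{m-k}N(t_0+m-d)\,x_d\;=\;N(t_0+m).$$ If $\prod_{j=1}^{m}N(t_0+j)\neq0$ (the empty product being $1$), then this linear system has a unique solution $(x_0,\dots,x_m)$.
   Context: This is the day-by-day (time step $1$) discretization of an infection-age-structured SIRS model started at time $t_0$ from a single cohort of $I_0$ infected individuals of infection age $0$; $N(t)$ is the number of newly infected individuals on day $t$, and $\mathcal{R}(t,a)=\tau(t)S(t)e^{-(\nu+D)a}\beta(a)$ is the reproductive power (rate at which an infectious individual at time $t$ and infection age $a$ produces secondary cases), with $\beta(a)=0$ for $a\ge a_+$. The $k$-th equation expresses $N(t_0+m)$ via the cohort structure present at time $t_0+k$, using that the cohort of infection age $j$ at time $t_0+k$ has size $e^{-(\nu+D)j}N(t_0+k-j)$ (and $I_0$ for the initial cohort). *)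

theory Defs
  imports Complex_Main "HOL-Library.FuncSet"
begin

end

theory Submission
  imports Defs
begin

text \<open>
  Reindexing the first sum by i = m - k + j shows that, for m \<ge> 1, the k-th equation reads
  T + N(t0 + k) x(m-k) = N(t0 + m), where T = \<Sum>(1 \<le> i < m) N(t0 + m - i) x(i) + I0 x(m)
  does not depend on k. Hence all products N(t0 + m - i) x(i), 0 \<le> i \<le> m, coincide with
  N(t0) x(m), so N(t0 + m) = (m N(t0) + I0) x(m). As m N(t0) + I0 > 0 this fixes x(m), and
  the nonvanishing of N(t0 + 1), ..., N(t0 + m) then fixes every other x(i). For m = 0 the
  system is just I0 x(0) = N(t0), whose solution is given by the same formula.
\<close>

lemma sum_window_plus_initial_segment:
  fixes g :: "nat \<Rightarrow> 'a::comm_monoid_add"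
  assumes "1 \<le> m" and "k \<le> m"
  shows "(\<Sum>j<k. g (m - k + j)) + (\<Sum>d=1..m-k. g d) = (\<Sum>i=1..<m. g i) + g (m - k)"
proof -
  have "(\<Sum>j<k. g (m - k + j)) = (\<Sum>j=0..<k. g (j + (m - k)))"
    by (simp add: lessThan_atLeast0 add.commute)
  also have "\<dots> = (\<Sum>i=0+(m-k)..<k+(m-k). g i)"
    by (rule sum.shift_bounds_nat_ivl[symmetric])
  finally have window: "(\<Sum>j<k. g (m - k + j)) = (\<Sum>i=m-k..<m. g i)"
    using assms(2) by simp
  show ?thesis
  proof (cases "k = m")
    case True
    then show ?thesis
      using assms sum.atLeast_Suc_lessThan[of 0 m g]
      by (simp add: window atLeast0LessThan add.commute)
  next
    case False
    then have "(\<Sum>d=1..m-k. g d) = (\<Sum>d=1..<m-k. g d) + g (m - k)"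
      using assms by (simp add: atLeastLessThanSuc_atLeastAtMost[symmetric] Suc_diff_le)
    moreover have "(\<Sum>d=1..<m-k. g d) + (\<Sum>i=m-k..<m. g i) = (\<Sum>i=1..<m. g i)"
      using False assms by (intro sum.atLeastLessThan_concat) auto
    ultimately show ?thesis
      unfolding window by (simp add: ac_simps)
  qed
qed

lemma equalized_system_iff:
  fixes w x :: "nat \<Rightarrow> 'a::field" and b c :: 'a
  assumes "1 \<le> m" and D_nonzero: "of_nat m * w m + c \<noteq> 0"
    and w_nonzero: "\<And>i. i < m \<Longrightarrow> w i \<noteq> 0"
  defines "\<xi> \<equiv> b / (of_nat m * w m + c)"
  shows "(\<forall>i\<le>m. (\<Sum>l=1..<m. w l * x l) + c * x m + w i * x i = b)
     \<longleftrightarrow> (\<forall>i\<le>m. x i = (if i = m then \<xi> else w m * \<xi> / w i))"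
    (is "(\<forall>i\<le>m. ?T + w i * x i = b) \<longleftrightarrow> _")
proof -
  have T_equalized: "?T + w m * x m = (of_nat m * w m + c) * x m"
    if equal: "\<And>i. i \<le> m \<Longrightarrow> w i * x i = w m * x m"
  proof -
    have "(\<Sum>l=1..<m. w l * x l) = (\<Sum>l=1..<m. w m * x m)"
      by (rule sum.cong[OF refl equal]) simp
    then have "?T + w m * x m = of_nat (m - 1) * (w m * x m) + c * x m + w m * x m"
      by simp
    also have "\<dots> = (of_nat m * w m + c) * x m"
      using assms(1) by (cases m) (simp_all add: algebra_simps)
    finally show ?thesis .
  qed
  have "(\<forall>i\<le>m. ?T + w i * x i = b)
      \<longleftrightarrow> (\<forall>i\<le>m. w i * x i = w m * x m) \<and> (of_nat m * w m + c) * x m = b"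
  proof
    assume eqs: "\<forall>i\<le>m. ?T + w i * x i = b"
    have equal: "\<forall>i\<le>m. w i * x i = w m * x m"
    proof (intro allI impI)
      fix i assume "i \<le> m"
      then have "?T + w i * x i = ?T + w m * x m"
        using eqs by simp
      then show "w i * x i = w m * x m"
        by simp
    qed
    moreover have "(of_nat m * w m + c) * x m = b"
      using T_equalized equal eqs by (metis order_refl)
    ultimately show "(\<forall>i\<le>m. w i * x i = w m * x m) \<and> (of_nat m * w m + c) * x m = b" ..
  next
    assume "(\<forall>i\<le>m. w i * x i = w m * x m) \<and> (of_nat m * w m + c) * x m = b"
    then have equal: "\<And>i. i \<le> m \<Longrightarrow> w i * x i = w m * x m"
      and total: "(of_nat m * w m + c) * x m = b"
      by blast+
    show "\<forall>i\<le>m. ?T + w i * x i = b"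
      using T_equalized[OF equal] total equal by metis
  qed
  also have "\<dots> \<longleftrightarrow> (\<forall>i\<le>m. x i = (if i = m then \<xi> else w m * \<xi> / w i))"
  proof -
    have xm: "(of_nat m * w m + c) * x m = b \<longleftrightarrow> x m = \<xi>"
      using D_nonzero unfolding \<xi>_def by (simp add: eq_divide_eq mult.commute)
    have xi: "w i * x i = w m * \<xi> \<longleftrightarrow> x i = w m * \<xi> / w i" if "i < m" for i
      using w_nonzero[OF that] by (simp add: eq_divide_eq mult.commute)
    show ?thesis
      unfolding xm using xi by (metis le_less)
  qed
  finally show ?thesis .
qed

lemma ex1_PiE_eq_on:
  "\<exists>!x. x \<in> A \<rightarrow>\<^sub>E UNIV \<and> (\<forall>i\<in>A. x i = s i)"
proof (rule ex1I[of _ "restrict s A"])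
  fix y assume "y \<in> A \<rightarrow>\<^sub>E UNIV \<and> (\<forall>i\<in>A. y i = s i)"
  then show "y = restrict s A"
    by (intro PiE_ext[of y A "\<lambda>_. UNIV"]) auto
qed auto

lemma cohort_system_iff:
  fixes N :: "int \<Rightarrow> 'a::field" and I0 :: 'a and t0 :: int and m :: nat and x :: "nat \<Rightarrow> 'a"
  assumes "of_nat m * N t0 + I0 \<noteq> 0" and "\<And>j. 1 \<le> j \<Longrightarrow> j \<le> m \<Longrightarrow> N (t0 + int j) \<noteq> 0"
  defines "\<xi> \<equiv> N (t0 + int m) / (of_nat m * N t0 + I0)"
  shows "(\<forall>k\<le>m. (\<Sum>j<k. N (t0 + int k - int j) * x (m - k + j)) + I0 * x m
                    + (\<Sum>d=1..m-k. N (t0 + int m - int d) * x d) = N (t0 + int m))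
     \<longleftrightarrow> (\<forall>i\<le>m. x i = (if i = m then \<xi> else N t0 * \<xi> / N (t0 + int m - int i)))"
proof (cases "m = 0")
  case True
  then show ?thesis
    using assms(1) unfolding \<xi>_def by (auto simp: field_simps)
next
  case False
  define w where "w i = N (t0 + int m - int i)" for i
  have equation_k: "(\<Sum>j<k. N (t0 + int k - int j) * x (m - k + j)) + I0 * x m
                    + (\<Sum>d=1..m-k. N (t0 + int m - int d) * x d)
      = (\<Sum>l=1..<m. w l * x l) + I0 * x m + w (m - k) * x (m - k)"
    if "k \<le> m" for k
  proof -
    have "(\<Sum>j<k. N (t0 + int k - int j) * x (m - k + j)) = (\<Sum>j<k. w (m - k + j) * x (m - k + j))"
      using that by (intro sum.cong) (auto simp: w_def algebra_simps)
    then show ?thesis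
      using sum_window_plus_initial_segment[of m k "\<lambda>i. w i * x i"] False that
      by (simp add: w_def ac_simps)
  qed
  have "(\<forall>k\<le>m. (\<Sum>j<k. N (t0 + int k - int j) * x (m - k + j)) + I0 * x m
                    + (\<Sum>d=1..m-k. N (t0 + int m - int d) * x d) = N (t0 + int m))
      \<longleftrightarrow> (\<forall>i\<le>m. (\<Sum>l=1..<m. w l * x l) + I0 * x m + w i * x i = N (t0 + int m))"
  proof -
    have reindex: "(\<forall>k\<le>m. P (m - k)) \<longleftrightarrow> (\<forall>i\<le>m. P i)" for P
      by (metis diff_diff_cancel diff_le_self)
    show ?thesis
      unfolding reindex[symmetric, of "\<lambda>i. (\<Sum>l=1..<m. w l * x l) + I0 * x m + w i * x i = N (t0 + int m)"]
      by (intro all_cong1 imp_cong refl) (simp only: equation_k)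
  qed
  also have "\<dots> \<longleftrightarrow> (\<forall>i\<le>m. x i = (if i = m then \<xi> else N t0 * \<xi> / N (t0 + int m - int i)))"
  proof -
    have "w i \<noteq> 0" if "i < m" for i
      using assms(2)[of "m - i"] that by (simp add: w_def add_diff_eq)
    moreover have "w m = N t0"
      by (simp add: w_def)
    ultimately show ?thesis
      using equalized_system_iff[of m w I0 x "N (t0 + int m)"] False assms(1)
      unfolding \<xi>_def w_def[symmetric] by simp
  qed
  finally show ?thesis .
qed

theorem theorem5p2:
  fixes a_plus I0 :: real and t0 :: int and N :: "int \<Rightarrow> real" and m :: nat
  assumes "a_plus > 0" and "I0 > 0"
    and "\<And>i::nat. N (t0 + int i) \<ge> 0"
    and "int m < \<lfloor>a_plus\<rfloor> + 1"
    and "(\<Prod>j=1..m. N (t0 + int j)) \<noteq> 0"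
  shows "\<exists>!x. x \<in> {..m} \<rightarrow>\<^sub>E (UNIV :: real set) \<and>
           (\<forall>k\<le>m. (\<Sum>j<k. N (t0 + int k - int j) * x (m - k + j)) + I0 * x m
                    + (\<Sum>d=1..m-k. N (t0 + int m - int d) * x d) = N (t0 + int m))"
proof -
  define \<xi> where "\<xi> = N (t0 + int m) / (real m * N t0 + I0)"
  define s where "s i = (if i = m then \<xi> else N t0 * \<xi> / N (t0 + int m - int i))" for i
  have "N t0 \<ge> 0"
    using assms(3)[of 0] by simp
  then have "real m * N t0 + I0 > 0"
    using \<open>I0 > 0\<close> by (simp add: add_nonneg_pos)
  moreover have "N (t0 + int j) \<noteq> 0" if "1 \<le> j" "j \<le> m" for j
    using assms(5) that by simp
  ultimately have system_iff:
    "(\<forall>k\<le>m. (\<Sum>j<k. N (t0 + int k - int j) * x (m - k + j)) + I0 * x m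
                    + (\<Sum>d=1..m-k. N (t0 + int m - int d) * x d) = N (t0 + int m))
     \<longleftrightarrow> (\<forall>i\<in>{..m}. x i = s i)" for x
    unfolding s_def \<xi>_def atMost_iff Ball_def by (intro cohort_system_iff) auto
  show ?thesis
    unfolding system_iff by (rule ex1_PiE_eq_on)
qed

end
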